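(* Let $K\ge2$ and consider a random point process on a discrete circle with holes indexed $1,2,\dots,K$ in clockwise order (each hole contains at most one particle), whose law is invariant under rotation, and such that $M:=\mathbb P(\text{there is a particle at hole }K)>0$. Define: $W\in\{1,\dots,K\}$, the smallest index $l$ such that hole $l$ contains a particle; $\mathrm{Sp}_1\in\{1,\dots,K\}$, the length of the arc through hole $K$ between the two consecutive particles surrounding it, namely the first particle clockwise strictly after hole $K$ and the last particle at or counterclockwise before hole $K$; and $\mathrm{Sp}_2\in\{1,\dots,K\}$, defined on the event that hole $K$ contains a particle, as the clockwise distance from hole $K$ to the next hole containing a particle. Let $g(L)=\mathbb P(W=L)$, $f_1(L)=\mathbb P(\mathrm{Sp}_1=L)$, $f_2(L)=\mathbb P(\mathrm{Sp}_2=L\mid\text{particle at hole }K)$, and $\Delta g(L)=g(L+1)-g(L)$ (with $g(K+1)=0$). Then for all $L\in\{1,\dots,K\}$, $$-\Delta g(L)\cdot L=f_1(L),\qquad -\Delta g(L)=M\cdot f_2(L).$$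
   Context: Distances are measured in numbers of steps between adjacent holes along the circle (adjacent holes are at distance 1). If hole $K$ is the only occupied hole, $\mathrm{Sp}_1=\mathrm{Sp}_2=W=K$. *)

theory Defs
  imports "HOL-Probability.Probability"
begin

text \<open>Holes are 1..K in clockwise order; a configuration is the set of occupied holes.\<close>

definition hole_cw :: "nat \<Rightarrow> nat \<Rightarrow> nat \<Rightarrow> nat" where
  "hole_cw K h d = (h + d - 1) mod K + 1"

definition rot :: "nat \<Rightarrow> nat set \<Rightarrow> nat set" where
  "rot K S = (\<lambda>i. hole_cw K i 1) ` S"

definition occ :: "nat \<Rightarrow> nat set \<Rightarrow> bool" where
  "occ K S \<longleftrightarrow> S \<inter> {1..K} \<noteq> {}"

definition W :: "nat \<Rightarrow> nat set \<Rightarrow> nat" where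
  "W K S = (if occ K S then (LEAST l. 1 \<le> l \<and> l \<le> K \<and> l \<in> S) else 0)"

definition fwd :: "nat \<Rightarrow> nat set \<Rightarrow> nat" where
  "fwd K S = (LEAST d. 1 \<le> d \<and> d \<le> K \<and> hole_cw K K d \<in> S)"

definition bwd :: "nat \<Rightarrow> nat set \<Rightarrow> nat" where
  "bwd K S = (LEAST d. d < K \<and> K - d \<in> S)"

definition Sp1 :: "nat \<Rightarrow> nat set \<Rightarrow> nat" where
  "Sp1 K S = (if occ K S then bwd K S + fwd K S else 0)"

definition Sp2 :: "nat \<Rightarrow> nat set \<Rightarrow> nat" where
  "Sp2 K S = (if K \<in> S then fwd K S else 0)"

end

theory Submission
  imports Defs
begin

text \<open>
  Rotating a configuration by one step moves every particle one hole further, the particle at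
  hole K moving to hole 1. Hence the first particle of the rotated configuration sits at
  l + 1 exactly when hole K is empty and the first particle sits at l; rotation invariance gives
  g(l + 1) = P(K empty, W = l), so -\<Delta>g(L) = P(K occupied, W = L). When K is occupied, Sp2
  is the position of the first particle, which is the second identity.
  The event Sp1 = L splits according to the position i \<in> {1..L} of the first particle into
  the events "the occupied holes span exactly [i, K - L + i]"; each is obtained from the event
  "span exactly [L, K]" = "K occupied and W = L" by rotation, so f1(L) = L (-\<Delta>g(L)).
\<close>

lemma hole_cw_one:
  assumes "i \<in> {1..K}"
  shows "hole_cw K i 1 = (if i = K then 1 else Suc i)"
  using assms by (auto simp: hole_cw_def)

lemma hole_cw_K:
  assumes "d \<in> {1..K}"
  shows "hole_cw K K d = d"
proof -
  have "K + d - 1 = (d - 1) + K" using assms by simp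
  then have "(K + d - 1) mod K = (d - 1) mod K" by simp
  also have "\<dots> = d - 1" using assms by (auto intro: mod_less)
  finally show ?thesis using assms by (simp add: hole_cw_def)
qed

lemma rot_eq:
  assumes "S \<subseteq> {1..K}"
  shows "rot K S = Suc ` (S - {K}) \<union> (if K \<in> S then {1} else {})"
proof -
  have "rot K S = (\<lambda>i. if i = K then 1 else Suc i) ` S"
    unfolding rot_def using assms hole_cw_one by (intro image_cong) auto
  then show ?thesis by auto
qed

lemma rot_subset:
  assumes "S \<subseteq> {1..K}"
  shows "rot K S \<subseteq> {1..K}"
proof -
  have "Suc ` (S - {K}) \<subseteq> {1..K}"
    using assms by (force simp: subset_iff)
  then show ?thesis
    unfolding rot_eq[OF assms] using assms by auto
qed

lemma W_eq_Min:
  assumes "S \<subseteq> {1..K}" "S \<noteq> {}"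
  shows "W K S = Min S"
proof -
  have fin: "finite S" using assms(1) finite_subset by blast
  have "Min S \<in> S" using fin assms(2) by simp
  with assms(1) have "Min S \<in> {1..K}" by blast
  with \<open>Min S \<in> S\<close> fin have "(LEAST l. 1 \<le> l \<and> l \<le> K \<and> l \<in> S) = Min S"
    by (intro Least_equality) auto
  moreover have "occ K S" using assms by (auto simp: occ_def)
  ultimately show ?thesis by (simp add: W_def)
qed

lemma W_eq_iff:
  assumes "S \<subseteq> {1..K}" "1 \<le> l"
  shows "W K S = l \<longleftrightarrow> l \<in> S \<and> S \<subseteq> {l..}"
proof (cases "S = {}")
  case True
  with assms show ?thesis by (auto simp: W_def occ_def)
next
  case False
  have fin: "finite S" using assms(1) finite_subset by blast
  have "W K S = Min S" "Min S \<in> S"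
    using W_eq_Min[OF assms(1) False] Min_in[OF fin False] by auto
  with fin show ?thesis by (auto intro: Min_eqI)
qed

lemma fwd_eq_Min:
  assumes "S \<subseteq> {1..K}" "S \<noteq> {}"
  shows "fwd K S = Min S"
proof -
  have fin: "finite S" using assms(1) finite_subset by blast
  have "Min S \<in> S" using fin assms(2) by simp
  with assms(1) have "Min S \<in> {1..K}" by blast
  with \<open>Min S \<in> S\<close> assms(1) fin show ?thesis
    unfolding fwd_def by (intro Least_equality) (auto simp: hole_cw_K)
qed

lemma bwd_eq_Max:
  assumes "S \<subseteq> {1..K}" "S \<noteq> {}"
  shows "bwd K S = K - Max S"
proof -
  have fin: "finite S" using assms(1) finite_subset by blast
  have "Max S \<in> S" using fin assms(2) by simp
  with assms(1) have "K - Max S < K \<and> K - (K - Max S) \<in> S" by auto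
  moreover have "K - Max S \<le> d" if "K - d \<in> S" for d
    using Max_ge[OF fin that] by linarith
  ultimately show ?thesis
    unfolding bwd_def by (intro Least_equality) auto
qed

lemma Sp1_eq:
  assumes "S \<subseteq> {1..K}" "S \<noteq> {}"
  shows "Sp1 K S = K - Max S + Min S"
  using assms by (auto simp: Sp1_def occ_def bwd_eq_Max fwd_eq_Min)

lemma Sp2_eq_W:
  assumes "S \<subseteq> {1..K}" "K \<in> S"
  shows "Sp2 K S = W K S"
proof -
  have "S \<noteq> {}" using assms(2) by blast
  with assms show ?thesis by (simp add: Sp2_def fwd_eq_Min W_eq_Min)
qed

definition spans :: "nat \<Rightarrow> nat \<Rightarrow> nat set \<Rightarrow> bool" where
  "spans a b S \<longleftrightarrow> a \<in> S \<and> b \<in> S \<and> S \<subseteq> {a..b}"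

lemma spans_eq_iff_Min_Max:
  assumes "finite S"
  shows "spans a b S \<longleftrightarrow> S \<noteq> {} \<and> Min S = a \<and> Max S = b"
proof
  assume "spans a b S"
  then have "a \<in> S" "b \<in> S" "\<forall>x\<in>S. a \<le> x \<and> x \<le> b" by (auto simp: spans_def)
  with assms show "S \<noteq> {} \<and> Min S = a \<and> Max S = b"
    by (auto intro: Min_eqI Max_eqI)
next
  assume "S \<noteq> {} \<and> Min S = a \<and> Max S = b"
  with assms show "spans a b S"
    using Min_in[OF assms] Max_in[OF assms] by (auto simp: spans_def)
qed

lemma spans_unique_start:
  assumes "spans a b S" "spans a' b' S"
  shows "a = a'"
  using assms unfolding spans_def by (meson atLeastAtMost_iff le_antisym subsetD)

lemma spans_K_iff:
  assumes "S \<subseteq> {1..K}" "1 \<le> L"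
  shows "spans L K S \<longleftrightarrow> K \<in> S \<and> W K S = L"
  using assms by (auto simp: spans_def W_eq_iff subset_iff)

lemma Sp1_eq_iff_spans:
  assumes "S \<subseteq> {1..K}" "L \<in> {1..K}"
  shows "Sp1 K S = L \<longleftrightarrow> (\<exists>i\<in>{1..L}. spans i (K - L + i) S)"
proof (cases "S = {}")
  case True
  with assms show ?thesis by (auto simp: Sp1_def occ_def spans_def)
next
  case False
  have fin: "finite S" using assms(1) finite_subset by blast
  then have "Min S \<in> S" "Max S \<in> S" "Min S \<le> Max S" using False by auto
  then have "1 \<le> Min S" "Max S \<le> K" using assms(1) by auto
  then show ?thesis
    using assms(2) Sp1_eq[OF assms(1) False] spans_eq_iff_Min_Max[OF fin] False by auto
qed

lemma W_rot_eq_Suc_iff: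
  assumes "S \<subseteq> {1..K}" "1 \<le> l"
  shows "W K (rot K S) = Suc l \<longleftrightarrow> K \<notin> S \<and> W K S = l"
  using assms W_eq_iff[OF rot_subset[OF assms(1)], of "Suc l"] W_eq_iff[OF assms]
  by (auto simp: rot_eq[OF assms(1)])

lemma spans_rot_iff:
  assumes "S \<subseteq> {1..K}" "1 \<le> a" "b < K"
  shows "spans (Suc a) (Suc b) (rot K S) \<longleftrightarrow> spans a b S"
  using assms by (auto simp: spans_def rot_eq)

locale rotation_invariant_process =
  fixes K :: nat and p :: "nat set pmf"
  assumes support_subset: "\<forall>S\<in>set_pmf p. S \<subseteq> {1..K}"
    and rot_invariant: "map_pmf (rot K) p = p"
begin

lemma prob_cong:
  assumes "\<And>S. S \<subseteq> {1..K} \<Longrightarrow> S \<in> A \<longleftrightarrow> S \<in> B"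
  shows "measure_pmf.prob p A = measure_pmf.prob p B"
proof -
  have "A \<inter> set_pmf p = B \<inter> set_pmf p" using assms support_subset by blast
  then show ?thesis by (metis measure_Int_set_pmf)
qed

lemma prob_rot_cong:
  assumes "\<And>S. S \<subseteq> {1..K} \<Longrightarrow> rot K S \<in> A \<longleftrightarrow> S \<in> B"
  shows "measure_pmf.prob p A = measure_pmf.prob p B"
proof -
  have "measure_pmf.prob p A = measure_pmf.prob p (rot K -` A)"
    by (metis rot_invariant measure_map_pmf)
  also have "\<dots> = measure_pmf.prob p B"
    using assms by (intro prob_cong) auto
  finally show ?thesis .
qed

lemma prob_W_eq_split:
  assumes "1 \<le> l"
  shows "measure_pmf.prob p {S. W K S = l} =
    measure_pmf.prob p {S. K \<in> S \<and> W K S = l} + measure_pmf.prob p {S. W K S = Suc l}"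
proof -
  have "measure_pmf.prob p {S. W K S = Suc l} = measure_pmf.prob p {S. K \<notin> S \<and> W K S = l}"
    using assms by (intro prob_rot_cong) (simp add: W_rot_eq_Suc_iff)
  moreover have "{S. W K S = l} = {S. K \<in> S \<and> W K S = l} \<union> {S. K \<notin> S \<and> W K S = l}"
    by auto
  ultimately show ?thesis
    by (simp add: measure_pmf.finite_measure_Union disjoint_iff)
qed

lemma prob_Sp2_eq:
  "measure_pmf.prob p {S. K \<in> S \<and> Sp2 K S = l} = measure_pmf.prob p {S. K \<in> S \<and> W K S = l}"
  by (intro prob_cong) (auto simp: Sp2_eq_W)

lemma prob_spans_shift:
  assumes "1 \<le> a" "b + j \<le> K"
  shows "measure_pmf.prob p {S. spans (a + j) (b + j) S} = measure_pmf.prob p {S. spans a b S}"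
  using assms(2)
proof (induction j)
  case (Suc j)
  have "measure_pmf.prob p {S. spans (Suc (a + j)) (Suc (b + j)) S} =
      measure_pmf.prob p {S. spans (a + j) (b + j) S}"
    using assms(1) Suc.prems by (intro prob_rot_cong) (simp add: spans_rot_iff)
  with Suc show ?case by simp
qed simp

lemma prob_Sp1_eq:
  assumes "L \<in> {1..K}"
  shows "measure_pmf.prob p {S. Sp1 K S = L} = real L * measure_pmf.prob p {S. K \<in> S \<and> W K S = L}"
proof -
  let ?window = "\<lambda>i. {S. spans i (K - L + i) S}"
  have "measure_pmf.prob p {S. Sp1 K S = L} = measure_pmf.prob p (\<Union>i\<in>{1..L}. ?window i)"
    using assms by (intro prob_cong) (simp add: Sp1_eq_iff_spans)
  also have "\<dots> = (\<Sum>i\<in>{1..L}. measure_pmf.prob p (?window i))"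
  proof (intro measure_pmf.finite_measure_finite_Union)
    show "disjoint_family_on ?window {1..L}"
      unfolding disjoint_family_on_def using spans_unique_start by blast
  qed auto
  also have "\<dots> = (\<Sum>i\<in>{1..L}. measure_pmf.prob p {S. spans L K S})"
  proof (intro sum.cong refl)
    fix i assume "i \<in> {1..L}"
    then show "measure_pmf.prob p (?window i) = measure_pmf.prob p {S. spans L K S}"
      using assms prob_spans_shift[of i "K - L + i" "L - i"] by simp
  qed
  also have "measure_pmf.prob p {S. spans L K S} = measure_pmf.prob p {S. K \<in> S \<and> W K S = L}"
    using assms by (intro prob_cong) (simp add: spans_K_iff)
  finally show ?thesis by simp
qed

end

theorem proposition4p2:
  fixes K :: nat and p :: "nat set pmf"
  assumes "K \<ge> 2"
    and "\<forall>S\<in>set_pmf p. S \<subseteq> {1..K}"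
    and "map_pmf (rot K) p = p"
    and "measure_pmf.prob p {S. K \<in> S} > 0"
  shows "\<forall>L\<in>{1..K}.
     let M = measure_pmf.prob p {S. K \<in> S};
         g = (\<lambda>l. measure_pmf.prob p {S. W K S = l});
         f1 = (\<lambda>l. measure_pmf.prob p {S. Sp1 K S = l});
         f2 = (\<lambda>l. measure_pmf.prob p {S. K \<in> S \<and> Sp2 K S = l} / M)
     in - (g (L + 1) - g L) * real L = f1 L \<and> - (g (L + 1) - g L) = M * f2 L"
proof -
  interpret rotation_invariant_process K p
    using assms(2,3) by unfold_locales
  have "measure_pmf.prob p {S. W K S = L} - measure_pmf.prob p {S. W K S = Suc L} =
      measure_pmf.prob p {S. K \<in> S \<and> W K S = L}" if "L \<in> {1..K}" for L
    using that prob_W_eq_split[of L] by simp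
  then show ?thesis
    using prob_Sp1_eq prob_Sp2_eq assms(4) by (simp add: Let_def)
qed

end
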